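(* Each formula $\Phi\in\mathtt{incl}$-$\mathtt{ESO}$-$\mathtt{HORN}$ is equivalent (i.e. $\langle w\rangle\models\Phi\iff\langle w\rangle\models\Phi'$ for all $w\in\Sigma^+$) to a formula $\Phi'=\exists\mathbf{R}'\forall x\forall y\,\psi'\in\mathtt{incl}$-$\mathtt{ESO}$-$\mathtt{HORN}$ each of whose clauses is of one of the following forms: (i) an input clause $x=y\wedge Q_s(x)\to R(x,y)$, for $s\in\Sigma$, $R\in\mathbf{R}'$; (ii) the contradiction clause $\mathtt{min}(x)\wedge\mathtt{max}(y)\wedge R_\bot(x,y)\to\bot$, for a fixed $R_\bot\in\mathbf{R}'$; (iii) a computation clause $x<y\wedge\delta_1\wedge\cdots\wedge\delta_r\to R(x,y)$, with $R\in\mathbf{R}'$, where each hypothesis $\delta_i$ is an atom of the form $S(x+1,y)$ or $S(x,y-1)$ for $S\in\mathbf{R}'$.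
   Context: Fix a finite alphabet $\Sigma$. A nonempty word $w=w_1\cdots w_n$ is represented by the structure $\langle w\rangle=([1,n];(Q_s)_{s\in\Sigma},\mathtt{min},\mathtt{max},\mathtt{suc},\mathtt{pred})$ with $Q_s(i)\iff w_i=s$, $\mathtt{min}(i)\iff i=1$, $\mathtt{max}(i)\iff i=n$, $\mathtt{suc}(i)=\min(i+1,n)$, $\mathtt{pred}(i)=\max(i-1,1)$. For an integer $a$, $x+a$ denotes $\mathtt{suc}^a(x)$ if $a\ge0$ and $\mathtt{pred}^{-a}(x)$ if $a<0$; $y-b=\mathtt{pred}^b(y)$. A formula of $\mathtt{incl}$-$\mathtt{ESO}$-$\mathtt{HORN}$ (inclusion Horn formula) is $\Phi=\exists\mathbf{R}\forall x\forall y\,\psi(x,y)$, $\mathbf{R}$ a finite set of binary relation symbols, $\psi$ a conjunction of Horn clauses over the signature $\{(Q_s)_{s\in\Sigma},\mathtt{min},\mathtt{max},\mathtt{suc},\mathtt{pred}\}\cup\mathbf{R}\cup\{=,\le,<\}$ (usual order on $[1,n]$), each of the form $x\le y\wedge\delta_1\wedge\cdots\wedge\delta_r\to\delta_0$ with $\delta_0$ an atom $R(x,y)$ ($R\in\mathbf{R}$) or $\bot$, and each $\delta_i$ one of: $U(x+a)$, $\neg U(x+a)$, $U(y+a)$, $\neg U(y+a)$ for $U\in\{(Q_s)_{s\in\Sigma},\mathtt{min},\mathtt{max}\}$ and $a\in\mathbb Z$; $x=y$ or $x<y$; a conjunction $S(x+a,y-b)\wedge x+a\le y-b$ with $S\in\mathbf{R}$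 and integers $a,b\ge0$. (In the normal form, the leading hypothesis $x\le y$ of a clause is redundant when $x=y$ or $x<y$ is present.) *)

theory Defs
  imports Main
begin

text \<open>Relation symbols are natural numbers; the set of existentially quantified
  relation symbols of a formula is the (finite) set of symbols occurring in it.
  Positions of a word w are 1..length w.\<close>

datatype fvar = VX | VY

datatype 'a upred = PQ 'a | PMin | PMax

datatype 'a hyp =
    HUnary bool fvar "'a upred" int   \<comment> \<open>polarity (True = positive), variable, predicate, offset a: U(v+a) or \<not>U(v+a)\<close>
  | HEq
  | HLt
  | HRel nat nat nat                   \<comment> \<open>HRel S a b: S(x+a, y-b) \<and> x+a \<le> y-b\<close>

datatype concl = CRel nat | CBot

type_synonym 'a clause = "'a hyp list \<times> concl"
type_synonym 'a formula = "'a clause list"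

definition suc_pos :: "nat \<Rightarrow> nat \<Rightarrow> nat" where
  "suc_pos n i = min (i + 1) n"

definition pred_pos :: "nat \<Rightarrow> nat" where
  "pred_pos i = max (i - 1) 1"

definition shift :: "nat \<Rightarrow> nat \<Rightarrow> int \<Rightarrow> nat" where
  "shift n i a = (if a \<ge> 0 then (suc_pos n ^^ nat a) i else (pred_pos ^^ nat (- a)) i)"

fun upred_holds :: "'a list \<Rightarrow> 'a upred \<Rightarrow> nat \<Rightarrow> bool" where
  "upred_holds w (PQ s) p = (w ! (p - 1) = s)"
| "upred_holds w PMin p = (p = 1)"
| "upred_holds w PMax p = (p = length w)"

fun hyp_holds :: "'a list \<Rightarrow> (nat \<Rightarrow> nat \<Rightarrow> nat \<Rightarrow> bool) \<Rightarrow> nat \<Rightarrow> nat \<Rightarrow> 'a hyp \<Rightarrow> bool" where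
  "hyp_holds w \<rho> x y (HUnary pol v U a) =
     (let p = shift (length w) (case v of VX \<Rightarrow> x | VY \<Rightarrow> y) a
      in (if pol then upred_holds w U p else \<not> upred_holds w U p))"
| "hyp_holds w \<rho> x y HEq = (x = y)"
| "hyp_holds w \<rho> x y HLt = (x < y)"
| "hyp_holds w \<rho> x y (HRel S a b) =
     (let i = shift (length w) x (int a); j = shift (length w) y (- int b)
      in \<rho> S i j \<and> i \<le> j)"

fun concl_holds :: "(nat \<Rightarrow> nat \<Rightarrow> nat \<Rightarrow> bool) \<Rightarrow> nat \<Rightarrow> nat \<Rightarrow> concl \<Rightarrow> bool" where
  "concl_holds \<rho> x y (CRel R) = \<rho> R x y"
| "concl_holds \<rho> x y CBot = False"

definition clause_holds :: "'a list \<Rightarrow> (nat \<Rightarrow> nat \<Rightarrow> nat \<Rightarrow> bool) \<Rightarrow> 'a clause \<Rightarrow> bool" where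
  "clause_holds w \<rho> c = (\<forall>x\<in>{1..length w}. \<forall>y\<in>{1..length w}.
      x \<le> y \<and> (\<forall>h\<in>set (fst c). hyp_holds w \<rho> x y h) \<longrightarrow> concl_holds \<rho> x y (snd c))"

definition sat :: "'a list \<Rightarrow> 'a formula \<Rightarrow> bool" where
  "sat w \<phi> = (\<exists>\<rho>. \<forall>c\<in>set \<phi>. clause_holds w \<rho> c)"

definition input_clause :: "'a clause \<Rightarrow> bool" where
  "input_clause c = (\<exists>s R. set (fst c) = {HEq, HUnary True VX (PQ s) 0} \<and> snd c = CRel R)"

definition contradiction_clause :: "nat \<Rightarrow> 'a clause \<Rightarrow> bool" where
  "contradiction_clause Rbot c =
     (set (fst c) = {HUnary True VX PMin 0, HUnary True VY PMax 0, HRel Rbot 0 0} \<and> snd c = CBot)"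

definition computation_clause :: "'a clause \<Rightarrow> bool" where
  "computation_clause c = (HLt \<in> set (fst c) \<and>
     (\<forall>h\<in>set (fst c). h = HLt \<or> (\<exists>S. h = HRel S 1 0 \<or> h = HRel S 0 1)) \<and>
     (\<exists>R. snd c = CRel R))"

definition normal_form :: "'a formula \<Rightarrow> bool" where
  "normal_form \<phi> = (\<exists>Rbot. \<forall>c\<in>set \<phi>.
      input_clause c \<or> contradiction_clause Rbot c \<or> computation_clause c)"

end

theory Submission
  imports Defs
begin

text \<open>The relations of the least model of \<open>\<phi>\<close> are computed from shorter intervals to longer
  ones, and a clause fired on an interval \<open>[x, y]\<close> only inspects letters within distance
  \<open>K = radius \<phi>\<close> of \<open>x\<close> and \<open>y\<close> and derived facts on subintervals \<open>[x + a, y - b]\<close> with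
  \<open>a, b \<le> K\<close>. Hence the profile of a word \<open>u\<close> (its first and last \<open>2K + 3\<close> letters, together
  with the facts derived and the contradictions reached on \<open>u\<close> inside every context of at
  most \<open>2K + 3\<close> letters on either side) takes finitely many values, is determined by the
  profiles of \<open>tl u\<close> and \<open>butlast u\<close>, and decides whether \<open>u\<close> satisfies \<open>\<phi>\<close>. A language with
  such an invariant is defined by a normal form formula with one relation per invariant value,
  holding exactly on the intervals whose factor has that value and evaluated bottom-up by
  computation clauses.\<close>

section \<open>Normal form formulas for languages with a compositional invariant\<close>

definition factor :: "'a list \<Rightarrow> nat \<Rightarrow> nat \<Rightarrow> 'a list" where
  "factor w i j = take (Suc j - i) (drop (i - 1) w)"

lemma length_factor: "1 \<le> i \<Longrightarrow> i \<le> j \<Longrightarrow> j \<le> length w \<Longrightarrow> length (factor w i j) = Suc j - i"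
  by (simp add: factor_def)

lemma factor_singleton: "1 \<le> i \<Longrightarrow> i \<le> length w \<Longrightarrow> factor w i i = [w ! (i - 1)]"
  by (simp add: factor_def take_Suc_conv_app_nth)

lemma tl_factor: "1 \<le> i \<Longrightarrow> i < j \<Longrightarrow> j \<le> length w \<Longrightarrow> tl (factor w i j) = factor w (Suc i) j"
  by (cases i) (auto simp: factor_def tl_take drop_Suc drop_tl)

lemma butlast_factor: "1 \<le> i \<Longrightarrow> i < j \<Longrightarrow> j \<le> length w \<Longrightarrow> butlast (factor w i j) = factor w i (j - 1)"
  by (simp add: factor_def butlast_take)

lemma factor_whole [simp]: "factor w (Suc 0) (length w) = w"
  by (simp add: factor_def)

lemma shift_0 [simp]: "shift n i 0 = i"
  by (simp add: shift_def)

lemma shift_1: "i < n \<Longrightarrow> shift n i 1 = Suc i"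
  by (simp add: shift_def suc_pos_def)

lemma shift_minus_1: "1 < i \<Longrightarrow> shift n i (- 1) = i - 1"
  by (simp add: shift_def pred_pos_def)

locale compositional_invariant =
  fixes I :: "'a::finite list \<Rightarrow> nat" and L :: "'a list set"
  assumes finite_range: "finite (range I)"
    and compositional: "\<And>u v. 2 \<le> length u \<Longrightarrow> 2 \<le> length v \<Longrightarrow>
      I (tl u) = I (tl v) \<Longrightarrow> I (butlast u) = I (butlast v) \<Longrightarrow> I u = I v"
    and saturating: "\<And>u v. u \<noteq> [] \<Longrightarrow> v \<noteq> [] \<Longrightarrow> I u = I v \<Longrightarrow> u \<in> L \<longleftrightarrow> v \<in> L"
begin

definition reject :: nat where
  "reject = Suc (Max (range I))"

lemma reject_not_in_range [simp]: "I u \<noteq> reject" "reject \<noteq> I u"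
  using Max_ge[OF finite_range, of "I u"] by (auto simp: reject_def)

definition computation :: "nat \<Rightarrow> nat \<Rightarrow> nat \<Rightarrow> 'a clause" where
  "computation S T R = ([HLt, HRel S 1 0, HRel T 0 1], CRel R)"

definition input :: "'a \<Rightarrow> nat \<Rightarrow> 'a clause" where
  "input s R = ([HEq, HUnary True VX (PQ s) 0], CRel R)"

definition contradiction :: "'a clause" where
  "contradiction = ([HUnary True VX PMin 0, HUnary True VY PMax 0, HRel reject 0 0], CBot)"

text \<open>Relation \<open>I u\<close> holds on the interval of positions of every factor \<open>u\<close>, and \<open>reject\<close>
  on those of every factor outside \<open>L\<close>; the computation clauses evaluate \<open>I\<close> bottom-up.\<close>
definition clauses :: "'a clause set" where
  "clauses = range (\<lambda>s. input s (I [s]))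
     \<union> (\<lambda>s. input s reject) ` {s. [s] \<notin> L}
     \<union> (\<lambda>u. computation (I (tl u)) (I (butlast u)) (I u)) ` {u. 2 \<le> length u}
     \<union> (\<lambda>u. computation (I (tl u)) (I (butlast u)) reject) ` {u. 2 \<le> length u \<and> u \<notin> L}
     \<union> {contradiction}"

lemma finite_clauses: "finite clauses"
proof -
  define C where "C = (\<lambda>(S, T, R). computation S T R) ` (range I \<times> range I \<times> insert reject (range I))"
  have "finite C"
    using finite_range by (simp add: C_def)
  have "computation (I (tl u)) (I (butlast u)) R \<in> C" if "R \<in> insert reject (range I)" for u R
    unfolding C_def using that by (intro image_eqI[of _ _ "(I (tl u), I (butlast u), R)"]) auto
  then have "(\<lambda>u. computation (I (tl u)) (I (butlast u)) (I u)) ` A \<subseteq> C"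
    "(\<lambda>u. computation (I (tl u)) (I (butlast u)) reject) ` A \<subseteq> C" for A
    by (simp_all add: image_subsetI)
  then show ?thesis
    unfolding clauses_def using finite_subset[OF _ \<open>finite C\<close>] by simp
qed

lemma normal_form_clauses:
  assumes "set \<phi> = clauses"
  shows "normal_form \<phi>"
proof -
  have "input_clause (input s R)" "computation_clause (computation S T R)"
    "contradiction_clause reject contradiction" for s R S T
    by (auto simp: input_def computation_def contradiction_def input_clause_def
        computation_clause_def contradiction_clause_def)
  then show ?thesis
    unfolding normal_form_def assms clauses_def by blast
qed

lemma clause_holds_input:
  "clause_holds w \<rho> (input s R) \<longleftrightarrow> (\<forall>x. 1 \<le> x \<longrightarrow> x \<le> length w \<longrightarrow> w ! (x - 1) = s \<longrightarrow> \<rho> R x x)"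
  by (auto simp: clause_holds_def input_def)

lemma clause_holds_computation:
  "clause_holds w \<rho> (computation S T R) \<longleftrightarrow>
     (\<forall>x y. 1 \<le> x \<longrightarrow> x < y \<longrightarrow> y \<le> length w \<longrightarrow> \<rho> S (Suc x) y \<longrightarrow> \<rho> T x (y - 1) \<longrightarrow> \<rho> R x y)"
  by (auto simp: clause_holds_def computation_def shift_1 shift_minus_1 Let_def)

lemma clause_holds_contradiction:
  "w \<noteq> [] \<Longrightarrow> clause_holds w \<rho> contradiction \<longleftrightarrow> \<not> \<rho> reject 1 (length w)"
  by (force simp: clause_holds_def contradiction_def Suc_le_eq)

definition factor_model :: "'a list \<Rightarrow> nat \<Rightarrow> nat \<Rightarrow> nat \<Rightarrow> bool" where
  "factor_model w R i j \<longleftrightarrow> 1 \<le> i \<and> i \<le> j \<and> j \<le> length w \<and>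
     (R = I (factor w i j) \<or> R = reject \<and> factor w i j \<notin> L)"

lemma factor_model_computation:
  assumes "1 \<le> x" "x < y" "y \<le> length w" "2 \<le> length u"
    and "factor_model w (I (tl u)) (Suc x) y" "factor_model w (I (butlast u)) x (y - 1)"
  shows "factor_model w (I u) x y" "u \<notin> L \<Longrightarrow> factor_model w reject x y"
proof -
  have "factor w x y \<noteq> []" "u \<noteq> []"
    using assms(1-4) by (auto simp: factor_def)
  moreover have "I (factor w x y) = I u"
  proof (rule compositional)
    show "2 \<le> length (factor w x y)" "2 \<le> length u"
      using assms(1-4) by (simp_all add: length_factor)
    show "I (tl (factor w x y)) = I (tl u)" "I (butlast (factor w x y)) = I (butlast u)"
      using assms by (simp_all add: factor_model_def tl_factor butlast_factor)
  qed
  ultimately have "factor w x y \<in> L \<longleftrightarrow> u \<in> L"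
    by (rule saturating)
  with \<open>I (factor w x y) = I u\<close> show "factor_model w (I u) x y" "u \<notin> L \<Longrightarrow> factor_model w reject x y"
    using assms(1-3) by (simp_all add: factor_model_def)
qed

lemma factor_model_clauses:
  assumes "w \<in> L" "w \<noteq> []" "c \<in> clauses"
  shows "clause_holds w (factor_model w) c"
  using assms(3) unfolding clauses_def
proof (elim UnE)
  assume "c \<in> (\<lambda>u. computation (I (tl u)) (I (butlast u)) (I u)) ` {u. 2 \<le> length u}"
  then show ?thesis
    using factor_model_computation(1) by (auto simp: clause_holds_computation)
next
  assume "c \<in> (\<lambda>u. computation (I (tl u)) (I (butlast u)) reject) ` {u. 2 \<le> length u \<and> u \<notin> L}"
  then show ?thesis
    using factor_model_computation(2) by (auto simp: clause_holds_computation)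
next
  assume "c \<in> {contradiction}"
  then show ?thesis
    using assms(1,2) by (auto simp: clause_holds_contradiction factor_model_def)
qed (auto simp: clause_holds_input factor_model_def factor_singleton)

lemma clauses_force_factor_model:
  assumes "\<forall>c\<in>clauses. clause_holds w \<rho> c" "factor_model w R i j"
  shows "\<rho> R i j"
proof -
  have "\<rho> (I (factor w i (i + d))) i (i + d) \<and> (factor w i (i + d) \<notin> L \<longrightarrow> \<rho> reject i (i + d))"
    if "1 \<le> i" "i + d \<le> length w" for i d
    using that
  proof (induction d arbitrary: i)
    case 0
    let ?s = "w ! (i - 1)"
    have "clause_holds w \<rho> (input ?s (I [?s]))" "[?s] \<notin> L \<Longrightarrow> clause_holds w \<rho> (input ?s reject)"
      using assms(1) unfolding clauses_def by blast+
    then show ?case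
      using 0 by (simp add: clause_holds_input factor_singleton)
  next
    case (Suc d)
    define u where "u = factor w i (i + Suc d)"
    have u: "2 \<le> length u" "tl u = factor w (Suc i) (Suc i + d)" "butlast u = factor w i (i + d)"
      using Suc.prems by (simp_all add: u_def length_factor tl_factor butlast_factor)
    have "\<rho> (I (tl u)) (Suc i) (i + Suc d)" "\<rho> (I (butlast u)) i (i + d)"
      using Suc.IH[of "Suc i"] Suc.IH[of i] Suc.prems u by simp_all
    then have step: "\<rho> R i (i + Suc d)" if "computation (I (tl u)) (I (butlast u)) R \<in> clauses" for R
      using assms(1) that Suc.prems by (auto simp: clause_holds_computation)
    have "computation (I (tl u)) (I (butlast u)) (I u) \<in> clauses"
      "u \<notin> L \<Longrightarrow> computation (I (tl u)) (I (butlast u)) reject \<in> clauses"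
      unfolding clauses_def using u(1) by blast+
    then show ?case
      using step unfolding u_def[symmetric] by blast
  qed
  from this[of i "j - i"] assms(2) show ?thesis
    by (auto simp: factor_model_def)
qed

lemma sat_clauses_iff:
  assumes "set \<phi> = clauses" "w \<noteq> []"
  shows "sat w \<phi> \<longleftrightarrow> w \<in> L"
proof
  assume "sat w \<phi>"
  then obtain \<rho> where \<rho>: "\<forall>c\<in>clauses. clause_holds w \<rho> c"
    using assms(1) by (auto simp: sat_def)
  show "w \<in> L"
  proof (rule ccontr)
    assume "w \<notin> L"
    then have "\<rho> reject 1 (length w)"
      using assms(2) by (intro clauses_force_factor_model[OF \<rho>]) (auto simp: factor_model_def Suc_le_eq)
    moreover have "clause_holds w \<rho> contradiction"
      using \<rho> by (simp add: clauses_def)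
    ultimately show False
      using assms(2) by (simp add: clause_holds_contradiction)
  qed
next
  assume "w \<in> L"
  then show "sat w \<phi>"
    unfolding sat_def assms(1) using factor_model_clauses[OF _ assms(2)] by blast
qed

end

lemma normal_form_definable_if_compositional:
  fixes I :: "'a::finite list \<Rightarrow> 'b"
  assumes "finite (range I)"
    and "\<And>u v. 2 \<le> length u \<Longrightarrow> 2 \<le> length v \<Longrightarrow>
      I (tl u) = I (tl v) \<Longrightarrow> I (butlast u) = I (butlast v) \<Longrightarrow> I u = I v"
    and "\<And>u v. u \<noteq> [] \<Longrightarrow> v \<noteq> [] \<Longrightarrow> I u = I v \<Longrightarrow> u \<in> L \<longleftrightarrow> v \<in> L"
  shows "\<exists>\<phi>. normal_form \<phi> \<and> (\<forall>w. w \<noteq> [] \<longrightarrow> (w \<in> L \<longleftrightarrow> sat w \<phi>))"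
proof -
  obtain f :: "'b \<Rightarrow> nat" where "inj_on f (range I)"
    using finite_imp_inj_to_nat_seg[OF assms(1)] by blast
  then have f_eq_iff: "f (I u) = f (I v) \<longleftrightarrow> I u = I v" for u v
    by (auto dest: inj_onD)
  interpret compositional_invariant "\<lambda>u. f (I u)" L
  proof
    show "finite (range (\<lambda>u. f (I u)))"
      unfolding range_composition using assms(1) by (rule finite_imageI)
  next
    fix u v :: "'a list"
    assume "2 \<le> length u" "2 \<le> length v"
      "f (I (tl u)) = f (I (tl v))" "f (I (butlast u)) = f (I (butlast v))"
    then show "f (I u) = f (I v)"
      using assms(2)[of u v] unfolding f_eq_iff by blast
  next
    fix u v :: "'a list"
    assume "u \<noteq> []" "v \<noteq> []" "f (I u) = f (I v)"
    then show "u \<in> L \<longleftrightarrow> v \<in> L"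
      using assms(3)[of u v] unfolding f_eq_iff by blast
  qed
  obtain \<phi> where "set \<phi> = clauses"
    using finite_list[OF finite_clauses] by blast
  then show ?thesis
    using normal_form_clauses sat_clauses_iff by blast
qed

section \<open>Least models\<close>

lemma hyp_holds_mono:
  "(\<And>S i j. \<rho> S i j \<longrightarrow> \<rho>' S i j) \<Longrightarrow> hyp_holds w \<rho> x y h \<longrightarrow> hyp_holds w \<rho>' x y h"
  by (cases h) (auto simp: Let_def)

inductive derived :: "'a formula \<Rightarrow> 'a list \<Rightarrow> nat \<Rightarrow> nat \<Rightarrow> nat \<Rightarrow> bool" for \<phi> w where
  derivedI: "c \<in> set \<phi> \<Longrightarrow> snd c = CRel R \<Longrightarrow> 1 \<le> x \<Longrightarrow> x \<le> y \<Longrightarrow> y \<le> length w \<Longrightarrow>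
    \<forall>h\<in>set (fst c). hyp_holds w (derived \<phi> w) x y h \<Longrightarrow> derived \<phi> w R x y"
  monos hyp_holds_mono

lemma derived_bounds:
  "derived \<phi> w R x y \<Longrightarrow> 1 \<le> x \<and> x \<le> y \<and> y \<le> length w \<and> (\<exists>c\<in>set \<phi>. snd c = CRel R)"
  by (induction rule: derived.induct) auto

lemma derived_least:
  assumes "\<forall>c\<in>set \<phi>. clause_holds w \<rho> c"
  shows "derived \<phi> w R x y \<Longrightarrow> \<rho> R x y"
proof (induction rule: derived.induct)
  case (derivedI c R x y)
  then have "\<forall>h\<in>set (fst c). hyp_holds w \<rho> x y h"
    using hyp_holds_mono[of "\<lambda>S i j. derived \<phi> w S i j \<and> \<rho> S i j" \<rho>] by blast
  with derivedI assms show ?case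
    unfolding clause_holds_def by force
qed

definition conflict_at :: "'a formula \<Rightarrow> 'a list \<Rightarrow> nat \<Rightarrow> nat \<Rightarrow> bool" where
  "conflict_at \<phi> w x y \<longleftrightarrow>
     (\<exists>c\<in>set \<phi>. snd c = CBot \<and> (\<forall>h\<in>set (fst c). hyp_holds w (derived \<phi> w) x y h))"

definition conflict_within :: "'a formula \<Rightarrow> 'a list \<Rightarrow> nat \<Rightarrow> nat \<Rightarrow> bool" where
  "conflict_within \<phi> w p q \<longleftrightarrow> (\<exists>x y. p \<le> x \<and> x \<le> y \<and> y \<le> q \<and> conflict_at \<phi> w x y)"

lemma sat_iff_no_conflict: "sat w \<phi> \<longleftrightarrow> \<not> conflict_within \<phi> w 1 (length w)"
proof
  assume "sat w \<phi>"
  then obtain \<rho> where \<rho>: "\<forall>c\<in>set \<phi>. clause_holds w \<rho> c"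
    unfolding sat_def by blast
  have "hyp_holds w \<rho> x y h" if "hyp_holds w (derived \<phi> w) x y h" for x y h
    using that hyp_holds_mono[of "derived \<phi> w" \<rho>] derived_least[OF \<rho>] by blast
  with \<rho> show "\<not> conflict_within \<phi> w 1 (length w)"
    unfolding conflict_within_def conflict_at_def clause_holds_def by force
next
  assume no_conflict: "\<not> conflict_within \<phi> w 1 (length w)"
  have "clause_holds w (derived \<phi> w) c" if "c \<in> set \<phi>" for c
  proof (cases "snd c")
    case (CRel R)
    with that show ?thesis
      unfolding clause_holds_def by (auto intro: derivedI)
  next
    case CBot
    with that no_conflict show ?thesis
      unfolding clause_holds_def conflict_within_def conflict_at_def by auto
  qed
  then show "sat w \<phi>"
    unfolding sat_def by blast
qed

lemma conflict_within_split:
  assumes "p < q"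
  shows "conflict_within \<phi> w p q \<longleftrightarrow>
    conflict_within \<phi> w (Suc p) q \<or> conflict_within \<phi> w p (q - 1) \<or> conflict_at \<phi> w p q"
proof
  assume "conflict_within \<phi> w p q"
  then obtain x y where "p \<le> x" "x \<le> y" "y \<le> q" "conflict_at \<phi> w x y"
    unfolding conflict_within_def by blast
  then consider "Suc p \<le> x" | "y \<le> q - 1" | "x = p" "y = q"
    by linarith
  then show "conflict_within \<phi> w (Suc p) q \<or> conflict_within \<phi> w p (q - 1) \<or> conflict_at \<phi> w p q"
    using \<open>x \<le> y\<close> \<open>y \<le> q\<close> \<open>p \<le> x\<close> \<open>conflict_at \<phi> w x y\<close>
    unfolding conflict_within_def by cases blast+
next
  have mono: "conflict_within \<phi> w p q" if "p \<le> p'" "q' \<le> q" "conflict_within \<phi> w p' q'" for p' q'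
    using that unfolding conflict_within_def by (meson order_trans)
  assume "conflict_within \<phi> w (Suc p) q \<or> conflict_within \<phi> w p (q - 1) \<or> conflict_at \<phi> w p q"
  then show "conflict_within \<phi> w p q"
  proof (elim disjE)
    show "conflict_at \<phi> w p q \<Longrightarrow> conflict_within \<phi> w p q"
      using assms unfolding conflict_within_def by (blast intro: less_imp_le)
  qed (rule mono; simp)+
qed

section \<open>Locality of derivations\<close>

lemma funpow_suc_pos: "i \<le> n \<Longrightarrow> (suc_pos n ^^ k) i = min (i + k) n"
  by (induction k) (auto simp: suc_pos_def)

lemma funpow_pred_pos: "1 \<le> i \<Longrightarrow> (pred_pos ^^ k) i = max (i - k) 1"
  by (induction k) (auto simp: pred_pos_def)

lemma shift_nonneg: "i \<le> n \<Longrightarrow> shift n i (int a) = min (i + a) n"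
  by (simp add: shift_def funpow_suc_pos)

lemma shift_nonpos: "1 \<le> i \<Longrightarrow> i \<le> n \<Longrightarrow> shift n i (- int b) = max (i - b) 1"
  by (cases "b = 0") (auto simp: shift_def funpow_suc_pos funpow_pred_pos)

lemma bounded_int_cases:
  assumes "\<bar>a\<bar> \<le> int K"
  obtains k where "a = int k" "k \<le> K" | k where "a = - int k" "k \<le> K"
  using assms by (cases a rule: int_cases2) auto

lemma shift_Suc:
  assumes "K + 2 \<le> x" "x \<le> n" "\<bar>a\<bar> \<le> int K"
  shows "shift (Suc n) (Suc x) a = Suc (shift n x a) \<and> 2 \<le> shift n x a \<and> shift n x a \<le> n"
  using assms(3) by (cases rule: bounded_int_cases) (use assms(1,2) in \<open>auto simp: shift_nonneg shift_nonpos\<close>)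

lemma shift_snoc:
  assumes "1 \<le> x" "x + K + 1 \<le> n" "\<bar>a\<bar> \<le> int K"
  shows "shift (Suc n) x a = shift n x a \<and> 1 \<le> shift n x a \<and> shift n x a + 1 \<le> n"
  using assms(3) by (cases rule: bounded_int_cases) (use assms(1,2) in \<open>auto simp: shift_nonneg shift_nonpos\<close>)

fun hyp_radius :: "'a hyp \<Rightarrow> nat" where
  "hyp_radius (HUnary pol v U a) = nat \<bar>a\<bar>"
| "hyp_radius (HRel S a b) = max a b"
| "hyp_radius HEq = 0"
| "hyp_radius HLt = 0"

definition radius :: "'a formula \<Rightarrow> nat" where
  "radius \<phi> = Max (insert 0 (hyp_radius ` (\<Union>c\<in>set \<phi>. set (fst c))))"

lemma hyp_radius_le_radius: "c \<in> set \<phi> \<Longrightarrow> h \<in> set (fst c) \<Longrightarrow> hyp_radius h \<le> radius \<phi>"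
  unfolding radius_def by (rule Max_ge) auto

definition same_neighbourhood :: "nat \<Rightarrow> 'a list \<Rightarrow> nat \<Rightarrow> 'a list \<Rightarrow> nat \<Rightarrow> bool" where
  "same_neighbourhood K w x w' x' \<longleftrightarrow> (\<forall>U a. \<bar>a\<bar> \<le> int K \<longrightarrow>
     upred_holds w U (shift (length w) x a) = upred_holds w' U (shift (length w') x' a))"

lemma same_neighbourhood_sym:
  "same_neighbourhood K w x w' x' \<Longrightarrow> same_neighbourhood K w' x' w x"
  by (simp add: same_neighbourhood_def)

lemma hyp_holds_transfer:
  assumes "hyp_holds w \<rho> x y h" "hyp_radius h \<le> K"
    and "same_neighbourhood K w x w' x'" "same_neighbourhood K w y w' y'"
    and "x = y \<longleftrightarrow> x' = y'" "x < y \<longleftrightarrow> x' < y'"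
    and "\<And>S a b. a \<le> K \<Longrightarrow> b \<le> K \<Longrightarrow>
      hyp_holds w \<rho> x y (HRel S a b) \<Longrightarrow> hyp_holds w' \<rho>' x' y' (HRel S a b)"
  shows "hyp_holds w' \<rho>' x' y' h"
  using assms by (cases h) (auto simp: same_neighbourhood_def Let_def split: fvar.splits)

text \<open>\<open>P\<close> relates intervals \<open>[x, y]\<close> of \<open>w\<close> to intervals \<open>[x', y']\<close> of \<open>w'\<close> that look alike
  within the radius of \<open>\<phi>\<close>, such that every subinterval a clause may inspect is either related
  again or already derived in \<open>w'\<close>.\<close>
locale derivation_simulation =
  fixes \<phi> :: "'a formula" and w w' :: "'a list" and P :: "nat \<Rightarrow> nat \<Rightarrow> nat \<Rightarrow> nat \<Rightarrow> bool"
  assumes simulated_bounds: "\<And>x y x' y'. P x y x' y' \<Longrightarrow> 1 \<le> x' \<and> x' \<le> y' \<and> y' \<le> length w'"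
    and simulated_neighbourhoods: "\<And>x y x' y'. P x y x' y' \<Longrightarrow>
      same_neighbourhood (radius \<phi>) w x w' x' \<and> same_neighbourhood (radius \<phi>) w y w' y' \<and>
      (x = y \<longleftrightarrow> x' = y') \<and> (x < y \<longleftrightarrow> x' < y')"
    and simulated_subintervals: "\<And>x y x' y' S a b. P x y x' y' \<Longrightarrow> a \<le> radius \<phi> \<Longrightarrow> b \<le> radius \<phi> \<Longrightarrow>
      hyp_holds w (derived \<phi> w) x y (HRel S a b) \<Longrightarrow>
      hyp_holds w' (\<lambda>S i' j'. P (shift (length w) x (int a)) (shift (length w) y (- int b)) i' j'
        \<or> derived \<phi> w' S i' j') x' y' (HRel S a b)"
begin

lemma hyp_holds_simulated:
  assumes "P x y x' y'" "hyp_radius h \<le> radius \<phi>"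
    and "hyp_holds w (\<lambda>S i j. derived \<phi> w S i j \<and> (\<forall>i' j'. P i j i' j' \<longrightarrow> derived \<phi> w' S i' j')) x y h"
  shows "hyp_holds w' (derived \<phi> w') x' y' h"
proof (rule hyp_holds_transfer[OF assms(3,2)])
  show "same_neighbourhood (radius \<phi>) w x w' x'" "same_neighbourhood (radius \<phi>) w y w' y'"
    "x = y \<longleftrightarrow> x' = y'" "x < y \<longleftrightarrow> x' < y'"
    using simulated_neighbourhoods[OF assms(1)] by simp_all
next
  fix S a b
  assume ab: "a \<le> radius \<phi>" "b \<le> radius \<phi>"
    and "hyp_holds w (\<lambda>S i j. derived \<phi> w S i j \<and> (\<forall>i' j'. P i j i' j' \<longrightarrow> derived \<phi> w' S i' j')) x y (HRel S a b)"
  moreover from this have "hyp_holds w (derived \<phi> w) x y (HRel S a b)"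
    by (simp add: Let_def)
  note simulated_subintervals[OF assms(1) ab this]
  ultimately show "hyp_holds w' (derived \<phi> w') x' y' (HRel S a b)"
    by (auto simp: Let_def)
qed

lemma derived_simulated: "derived \<phi> w R x y \<Longrightarrow> P x y x' y' \<Longrightarrow> derived \<phi> w' R x' y'"
proof (induction arbitrary: x' y' rule: derived.induct)
  case (derivedI c R x y)
  show ?case
  proof (rule derived.derivedI[OF derivedI.hyps(1,2)])
    show "1 \<le> x'" "x' \<le> y'" "y' \<le> length w'"
      using simulated_bounds[OF derivedI.prems] by simp_all
    show "\<forall>h\<in>set (fst c). hyp_holds w' (derived \<phi> w') x' y' h"
      using derivedI.hyps(1) derivedI.IH derivedI.prems hyp_holds_simulated hyp_radius_le_radius by blast
  qed
qed

lemma conflict_at_simulated: "conflict_at \<phi> w x y \<Longrightarrow> P x y x' y' \<Longrightarrow> conflict_at \<phi> w' x' y'"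
proof -
  assume "conflict_at \<phi> w x y" "P x y x' y'"
  then obtain c where c: "c \<in> set \<phi>" "snd c = CBot"
    and hyps: "\<forall>h\<in>set (fst c). hyp_holds w (derived \<phi> w) x y h"
    unfolding conflict_at_def by blast
  have "hyp_holds w' (derived \<phi> w') x' y' h" if "h \<in> set (fst c)" for h
  proof (rule hyp_holds_simulated[OF \<open>P x y x' y'\<close>])
    show "hyp_radius h \<le> radius \<phi>"
      using c(1) that by (rule hyp_radius_le_radius)
    have "\<forall>S i j. derived \<phi> w S i j \<longrightarrow>
        derived \<phi> w S i j \<and> (\<forall>i' j'. P i j i' j' \<longrightarrow> derived \<phi> w' S i' j')"
      using derived_simulated by blast
    then show "hyp_holds w (\<lambda>S i j. derived \<phi> w S i j \<and> (\<forall>i' j'. P i j i' j' \<longrightarrow> derived \<phi> w' S i' j')) x y h"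
      using hyps that hyp_holds_mono[of "derived \<phi> w"
          "\<lambda>S i j. derived \<phi> w S i j \<and> (\<forall>i' j'. P i j i' j' \<longrightarrow> derived \<phi> w' S i' j')"]
      by blast
  qed
  with c show ?thesis
    unfolding conflict_at_def by blast
qed

end

lemma shift_nonneg_ge: "x \<le> n \<Longrightarrow> x \<le> shift n x (int a)"
  by (simp add: shift_nonneg)

lemma shift_nonpos_le: "1 \<le> y \<Longrightarrow> y \<le> n \<Longrightarrow> shift n y (- int b) \<le> y"
  by (simp add: shift_nonpos)

lemma shift_Suc_subinterval:
  assumes "K + 2 \<le> x" "x \<le> y" "y \<le> n" "a \<le> K" "b \<le> K"
  shows "shift (Suc n) (Suc x) (int a) = Suc (shift n x (int a))"
    and "shift (Suc n) (Suc y) (- int b) = Suc (shift n y (- int b))"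
    and "K + 2 \<le> shift n x (int a)" and "shift n y (- int b) \<le> n"
  using assms shift_Suc[of K x n "int a"] shift_Suc[of K y n "- int b"] shift_nonneg_ge[of x n a] by auto

lemma shift_snoc_subinterval:
  assumes "1 \<le> x" "x \<le> y" "y + K + 1 \<le> n" "a \<le> K" "b \<le> K"
  shows "shift (Suc n) x (int a) = shift n x (int a)"
    and "shift (Suc n) y (- int b) = shift n y (- int b)"
    and "1 \<le> shift n x (int a)" and "shift n y (- int b) + K + 1 \<le> n"
  using assms shift_snoc[of x K n "int a"] shift_snoc[of y K n "- int b"] shift_nonpos_le[of y n b] by auto

lemma upred_holds_Cons: "2 \<le> p \<Longrightarrow> p \<le> length v \<Longrightarrow> upred_holds (l # v) U (Suc p) = upred_holds v U p"
  by (cases U) (auto simp: nth_Cons')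

lemma upred_holds_snoc: "1 \<le> p \<Longrightarrow> p + 1 \<le> length v \<Longrightarrow> upred_holds (v @ [l]) U p = upred_holds v U p"
  by (cases U) (auto simp: nth_append)

lemma same_neighbourhood_Cons:
  assumes "K + 2 \<le> x" "x \<le> length v"
  shows "same_neighbourhood K (l # v) (Suc x) v x"
  unfolding same_neighbourhood_def
proof (intro allI impI)
  fix U a assume "\<bar>a\<bar> \<le> int K"
  with assms have "shift (Suc (length v)) (Suc x) a = Suc (shift (length v) x a)"
    "2 \<le> shift (length v) x a" "shift (length v) x a \<le> length v"
    using shift_Suc by blast+
  then show "upred_holds (l # v) U (shift (length (l # v)) (Suc x) a) = upred_holds v U (shift (length v) x a)"
    by (simp add: upred_holds_Cons)
qed

lemma same_neighbourhood_snoc: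
  assumes "1 \<le> x" "x + K + 1 \<le> length v"
  shows "same_neighbourhood K (v @ [l]) x v x"
  unfolding same_neighbourhood_def
proof (intro allI impI)
  fix U a assume "\<bar>a\<bar> \<le> int K"
  with assms have "shift (Suc (length v)) x a = shift (length v) x a"
    "1 \<le> shift (length v) x a" "shift (length v) x a + 1 \<le> length v"
    using shift_snoc by blast+
  then show "upred_holds (v @ [l]) U (shift (length (v @ [l])) x a) = upred_holds v U (shift (length v) x a)"
    by (simp add: upred_holds_snoc)
qed

lemma simulation_drop_head:
  "derivation_simulation \<phi> (l # v) v
    (\<lambda>X Y x y. X = Suc x \<and> Y = Suc y \<and> radius \<phi> + 2 \<le> x \<and> x \<le> y \<and> y \<le> length v)"
proof
  fix X Y x y
  assume P: "X = Suc x \<and> Y = Suc y \<and> radius \<phi> + 2 \<le> x \<and> x \<le> y \<and> y \<le> length v"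
  then show "1 \<le> x \<and> x \<le> y \<and> y \<le> length v"
    by simp
  show "same_neighbourhood (radius \<phi>) (l # v) X v x \<and> same_neighbourhood (radius \<phi>) (l # v) Y v y \<and>
      (X = Y \<longleftrightarrow> x = y) \<and> (X < Y \<longleftrightarrow> x < y)"
    using P same_neighbourhood_Cons[of "radius \<phi>" x v l] same_neighbourhood_Cons[of "radius \<phi>" y v l] by auto
next
  fix X Y x y S a b
  assume "X = Suc x \<and> Y = Suc y \<and> radius \<phi> + 2 \<le> x \<and> x \<le> y \<and> y \<le> length v"
    "a \<le> radius \<phi>" "b \<le> radius \<phi>" "hyp_holds (l # v) (derived \<phi> (l # v)) X Y (HRel S a b)"
  then show "hyp_holds v (\<lambda>S i' j'. (shift (length (l # v)) X (int a) = Suc i' \<and>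
      shift (length (l # v)) Y (- int b) = Suc j' \<and> radius \<phi> + 2 \<le> i' \<and> i' \<le> j' \<and> j' \<le> length v)
      \<or> derived \<phi> v S i' j') x y (HRel S a b)"
    using shift_Suc_subinterval[of "radius \<phi>" x y "length v" a b] by (auto simp: Let_def)
qed

lemma simulation_add_head:
  "derivation_simulation \<phi> v (l # v)
    (\<lambda>x y X Y. X = Suc x \<and> Y = Suc y \<and> radius \<phi> + 2 \<le> x \<and> x \<le> y \<and> y \<le> length v)"
proof
  fix X Y x y
  assume P: "X = Suc x \<and> Y = Suc y \<and> radius \<phi> + 2 \<le> x \<and> x \<le> y \<and> y \<le> length v"
  then show "1 \<le> X \<and> X \<le> Y \<and> Y \<le> length (l # v)"
    by simp
  show "same_neighbourhood (radius \<phi>) v x (l # v) X \<and> same_neighbourhood (radius \<phi>) v y (l # v) Y \<and>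
      (x = y \<longleftrightarrow> X = Y) \<and> (x < y \<longleftrightarrow> X < Y)"
    using P same_neighbourhood_Cons[of "radius \<phi>" x v l] same_neighbourhood_Cons[of "radius \<phi>" y v l]
      same_neighbourhood_sym by auto
next
  fix X Y x y S a b
  assume "X = Suc x \<and> Y = Suc y \<and> radius \<phi> + 2 \<le> x \<and> x \<le> y \<and> y \<le> length v"
    "a \<le> radius \<phi>" "b \<le> radius \<phi>" "hyp_holds v (derived \<phi> v) x y (HRel S a b)"
  then show "hyp_holds (l # v) (\<lambda>S I J. (I = Suc (shift (length v) x (int a)) \<and>
      J = Suc (shift (length v) y (- int b)) \<and> radius \<phi> + 2 \<le> shift (length v) x (int a) \<and>
      shift (length v) x (int a) \<le> shift (length v) y (- int b) \<and> shift (length v) y (- int b) \<le> length v)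
      \<or> derived \<phi> (l # v) S I J) X Y (HRel S a b)"
    using shift_Suc_subinterval[of "radius \<phi>" x y "length v" a b] by (auto simp: Let_def)
qed

lemma simulation_drop_last:
  "derivation_simulation \<phi> (v @ [l]) v
    (\<lambda>x y x' y'. x' = x \<and> y' = y \<and> 1 \<le> x \<and> x \<le> y \<and> y + radius \<phi> + 1 \<le> length v)"
proof
  fix x y x' y'
  assume P: "x' = x \<and> y' = y \<and> 1 \<le> x \<and> x \<le> y \<and> y + radius \<phi> + 1 \<le> length v"
  then show "1 \<le> x' \<and> x' \<le> y' \<and> y' \<le> length v"
    by simp
  show "same_neighbourhood (radius \<phi>) (v @ [l]) x v x' \<and> same_neighbourhood (radius \<phi>) (v @ [l]) y v y' \<and>
      (x = y \<longleftrightarrow> x' = y') \<and> (x < y \<longleftrightarrow> x' < y')"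
    using P same_neighbourhood_snoc[of x "radius \<phi>" v l] same_neighbourhood_snoc[of y "radius \<phi>" v l] by auto
next
  fix x y x' y' S a b
  assume "x' = x \<and> y' = y \<and> 1 \<le> x \<and> x \<le> y \<and> y + radius \<phi> + 1 \<le> length v"
    "a \<le> radius \<phi>" "b \<le> radius \<phi>" "hyp_holds (v @ [l]) (derived \<phi> (v @ [l])) x y (HRel S a b)"
  then show "hyp_holds v (\<lambda>S i' j'. (i' = shift (length (v @ [l])) x (int a) \<and>
      j' = shift (length (v @ [l])) y (- int b) \<and> 1 \<le> shift (length (v @ [l])) x (int a) \<and>
      shift (length (v @ [l])) x (int a) \<le> shift (length (v @ [l])) y (- int b) \<and>
      shift (length (v @ [l])) y (- int b) + radius \<phi> + 1 \<le> length v) \<or> derived \<phi> v S i' j') x' y' (HRel S a b)"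
    using shift_snoc_subinterval[of x y "radius \<phi>" "length v" a b] by (auto simp: Let_def)
qed

lemma simulation_add_last:
  "derivation_simulation \<phi> v (v @ [l])
    (\<lambda>x y x' y'. x' = x \<and> y' = y \<and> 1 \<le> x \<and> x \<le> y \<and> y + radius \<phi> + 1 \<le> length v)"
proof
  fix x y x' y'
  assume P: "x' = x \<and> y' = y \<and> 1 \<le> x \<and> x \<le> y \<and> y + radius \<phi> + 1 \<le> length v"
  then show "1 \<le> x' \<and> x' \<le> y' \<and> y' \<le> length (v @ [l])"
    by simp
  show "same_neighbourhood (radius \<phi>) v x (v @ [l]) x' \<and> same_neighbourhood (radius \<phi>) v y (v @ [l]) y' \<and>
      (x = y \<longleftrightarrow> x' = y') \<and> (x < y \<longleftrightarrow> x' < y')"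
    using P same_neighbourhood_snoc[of x "radius \<phi>" v l] same_neighbourhood_snoc[of y "radius \<phi>" v l]
      same_neighbourhood_sym by auto
next
  fix x y x' y' S a b
  assume "x' = x \<and> y' = y \<and> 1 \<le> x \<and> x \<le> y \<and> y + radius \<phi> + 1 \<le> length v"
    "a \<le> radius \<phi>" "b \<le> radius \<phi>" "hyp_holds v (derived \<phi> v) x y (HRel S a b)"
  then show "hyp_holds (v @ [l]) (\<lambda>S i' j'. (i' = shift (length v) x (int a) \<and>
      j' = shift (length v) y (- int b) \<and> 1 \<le> shift (length v) x (int a) \<and>
      shift (length v) x (int a) \<le> shift (length v) y (- int b) \<and>
      shift (length v) y (- int b) + radius \<phi> + 1 \<le> length v) \<or> derived \<phi> (v @ [l]) S i' j') x' y' (HRel S a b)"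
    using shift_snoc_subinterval[of x y "radius \<phi>" "length v" a b] by (auto simp: Let_def)
qed

lemma derived_conflict_at_Cons:
  assumes "radius \<phi> + 2 \<le> x" "x \<le> y" "y \<le> length v"
  shows "derived \<phi> (l # v) R (Suc x) (Suc y) \<longleftrightarrow> derived \<phi> v R x y"
    and "conflict_at \<phi> (l # v) (Suc x) (Suc y) \<longleftrightarrow> conflict_at \<phi> v x y"
proof -
  interpret drop: derivation_simulation \<phi> "l # v" v
    "\<lambda>X Y x y. X = Suc x \<and> Y = Suc y \<and> radius \<phi> + 2 \<le> x \<and> x \<le> y \<and> y \<le> length v"
    by (rule simulation_drop_head)
  interpret add: derivation_simulation \<phi> v "l # v"
    "\<lambda>x y X Y. X = Suc x \<and> Y = Suc y \<and> radius \<phi> + 2 \<le> x \<and> x \<le> y \<and> y \<le> length v"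
    by (rule simulation_add_head)
  show "derived \<phi> (l # v) R (Suc x) (Suc y) \<longleftrightarrow> derived \<phi> v R x y"
    using drop.derived_simulated[of R "Suc x" "Suc y" x y] add.derived_simulated[of R x y "Suc x" "Suc y"] assms
    by auto
  show "conflict_at \<phi> (l # v) (Suc x) (Suc y) \<longleftrightarrow> conflict_at \<phi> v x y"
    using drop.conflict_at_simulated[of "Suc x" "Suc y" x y] add.conflict_at_simulated[of x y "Suc x" "Suc y"] assms
    by auto
qed

lemma derived_conflict_at_snoc:
  assumes "1 \<le> x" "x \<le> y" "y + radius \<phi> + 1 \<le> length v"
  shows "derived \<phi> (v @ [l]) R x y \<longleftrightarrow> derived \<phi> v R x y"
    and "conflict_at \<phi> (v @ [l]) x y \<longleftrightarrow> conflict_at \<phi> v x y"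
proof -
  interpret drop: derivation_simulation \<phi> "v @ [l]" v
    "\<lambda>x y x' y'. x' = x \<and> y' = y \<and> 1 \<le> x \<and> x \<le> y \<and> y + radius \<phi> + 1 \<le> length v"
    by (rule simulation_drop_last)
  interpret add: derivation_simulation \<phi> v "v @ [l]"
    "\<lambda>x y x' y'. x' = x \<and> y' = y \<and> 1 \<le> x \<and> x \<le> y \<and> y + radius \<phi> + 1 \<le> length v"
    by (rule simulation_add_last)
  show "derived \<phi> (v @ [l]) R x y \<longleftrightarrow> derived \<phi> v R x y"
    using drop.derived_simulated[of R x y x y] add.derived_simulated[of R x y x y] assms by auto
  show "conflict_at \<phi> (v @ [l]) x y \<longleftrightarrow> conflict_at \<phi> v x y"
    using drop.conflict_at_simulated[of x y x y] add.conflict_at_simulated[of x y x y] assms by auto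
qed

lemma derived_Cons_iff:
  assumes "radius \<phi> + 2 \<le> x" "y \<le> length v"
  shows "derived \<phi> (l # v) R (Suc x) (Suc y) \<longleftrightarrow> derived \<phi> v R x y"
proof (cases "x \<le> y")
  case True
  with assms show ?thesis
    by (intro derived_conflict_at_Cons(1))
qed (auto dest: derived_bounds)

lemma derived_snoc_iff:
  assumes "1 \<le> x" "y + radius \<phi> + 1 \<le> length v"
  shows "derived \<phi> (v @ [l]) R x y \<longleftrightarrow> derived \<phi> v R x y"
proof (cases "x \<le> y")
  case True
  with assms show ?thesis
    by (intro derived_conflict_at_snoc(1))
qed (auto dest: derived_bounds)

lemma conflict_within_Cons_iff:
  assumes "radius \<phi> + 2 \<le> p" "q \<le> length v"
  shows "conflict_within \<phi> (l # v) (Suc p) (Suc q) \<longleftrightarrow> conflict_within \<phi> v p q"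
proof
  assume "conflict_within \<phi> (l # v) (Suc p) (Suc q)"
  then obtain x y where "p \<le> x" "x \<le> y" "y \<le> q" "conflict_at \<phi> (l # v) (Suc x) (Suc y)"
    unfolding conflict_within_def by (metis Suc_le_D Suc_le_mono)
  with assms show "conflict_within \<phi> v p q"
    unfolding conflict_within_def by (meson derived_conflict_at_Cons(2) order_trans)
next
  assume "conflict_within \<phi> v p q"
  then obtain x y where "p \<le> x" "x \<le> y" "y \<le> q" "conflict_at \<phi> v x y"
    unfolding conflict_within_def by blast
  with assms show "conflict_within \<phi> (l # v) (Suc p) (Suc q)"
    unfolding conflict_within_def by (meson Suc_le_mono derived_conflict_at_Cons(2) order_trans)
qed

lemma conflict_within_snoc_iff:
  assumes "1 \<le> p" "q + radius \<phi> + 1 \<le> length v"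
  shows "conflict_within \<phi> (v @ [l]) p q \<longleftrightarrow> conflict_within \<phi> v p q"
proof -
  have "conflict_at \<phi> (v @ [l]) x y \<longleftrightarrow> conflict_at \<phi> v x y" if "p \<le> x" "x \<le> y" "y \<le> q" for x y
    using assms that by (intro derived_conflict_at_snoc(2)) auto
  then show ?thesis
    unfolding conflict_within_def by blast
qed

section \<open>Profiles\<close>

text \<open>A context of more than \<open>K\<close> letters separates the intervals inside it from the rest of the
  word, and in a word of more than \<open>2K\<close> letters every interval \<open>[x + a, y - b]\<close> with
  \<open>a, b \<le> K\<close> is nonempty; \<open>window K\<close> is chosen with room to spare for both.\<close>
definition window :: "nat \<Rightarrow> nat" where
  "window K = 2 * K + 3"

definition absorb_left :: "nat \<Rightarrow> 'a list \<Rightarrow> 'a \<Rightarrow> 'a list" where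
  "absorb_left W lc l = (if length lc < W then lc @ [l] else tl lc @ [l])"

definition absorb_right :: "nat \<Rightarrow> 'a \<Rightarrow> 'a list \<Rightarrow> 'a list" where
  "absorb_right W l rc = (if length rc < W then l # rc else l # butlast rc)"

definition inner_facts :: "'a formula \<Rightarrow> 'a list \<Rightarrow> ('a list \<times> 'a list \<times> nat \<times> nat \<times> nat) set" where
  "inner_facts \<phi> u = {(lc, rc, S, a, b). length lc \<le> window (radius \<phi>) \<and> length rc \<le> window (radius \<phi>) \<and>
     a \<le> radius \<phi> \<and> b \<le> radius \<phi> \<and>
     derived \<phi> (lc @ u @ rc) S (Suc (length lc) + a) (length lc + length u - b)}"

definition inner_conflicts :: "'a formula \<Rightarrow> 'a list \<Rightarrow> ('a list \<times> 'a list) set" where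
  "inner_conflicts \<phi> u = {(lc, rc). length lc \<le> window (radius \<phi>) \<and> length rc \<le> window (radius \<phi>) \<and>
     conflict_within \<phi> (lc @ u @ rc) (Suc (length lc)) (length lc + length u)}"

lemma derived_Cons_inner_facts:
  assumes "length lc \<le> window (radius \<phi>)" "length rc \<le> window (radius \<phi>)" "Suc a \<le> radius \<phi>" "b \<le> radius \<phi>"
  shows "derived \<phi> (lc @ (l # u) @ rc) S (Suc (length lc) + Suc a) (length lc + length (l # u) - b) \<longleftrightarrow>
    (absorb_left (window (radius \<phi>)) lc l, rc, S, a, b) \<in> inner_facts \<phi> u"
proof (cases "length lc < window (radius \<phi>)")
  case True
  with assms show ?thesis
    by (simp add: inner_facts_def absorb_left_def)
next
  case False
  with assms(1) obtain m lt where lc: "lc = m # lt" "length lt = 2 * radius \<phi> + 2"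
    by (cases lc) (auto simp: window_def)
  then have "derived \<phi> (m # (lt @ l # u @ rc)) S (Suc (Suc (length lt) + Suc a)) (Suc (length lt + Suc (length u) - b))
      \<longleftrightarrow> derived \<phi> (lt @ l # u @ rc) S (Suc (length lt) + Suc a) (length lt + Suc (length u) - b)"
    using assms(4) by (intro derived_Cons_iff) auto
  moreover have "Suc (length lt + Suc (length u) - b) = length lc + length (l # u) - b"
    using lc assms(4) by simp
  ultimately show ?thesis
    using False assms lc by (simp add: inner_facts_def absorb_left_def window_def)
qed

lemma derived_snoc_inner_facts:
  assumes "length lc \<le> window (radius \<phi>)" "length rc \<le> window (radius \<phi>)" "a \<le> radius \<phi>" "Suc b \<le> radius \<phi>"
  shows "derived \<phi> (lc @ (u @ [l]) @ rc) S (Suc (length lc) + a) (length lc + length (u @ [l]) - Suc b) \<longleftrightarrow>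
    (lc, absorb_right (window (radius \<phi>)) l rc, S, a, b) \<in> inner_facts \<phi> u"
proof (cases "length rc < window (radius \<phi>)")
  case True
  with assms show ?thesis
    by (simp add: inner_facts_def absorb_right_def)
next
  case False
  with assms(2) obtain m rb where rc: "rc = rb @ [m]" "length rb = 2 * radius \<phi> + 2"
    by (cases rc rule: rev_exhaust) (auto simp: window_def)
  then have "derived \<phi> ((lc @ u @ l # rb) @ [m]) S (Suc (length lc) + a) (length lc + length u - b)
      \<longleftrightarrow> derived \<phi> (lc @ u @ l # rb) S (Suc (length lc) + a) (length lc + length u - b)"
    by (intro derived_snoc_iff) auto
  then show ?thesis
    using False assms rc by (simp add: inner_facts_def absorb_right_def window_def)
qed

lemma conflict_within_Cons_inner_conflicts:
  assumes "length lc \<le> window (radius \<phi>)" "length rc \<le> window (radius \<phi>)"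
  shows "conflict_within \<phi> (lc @ (l # u) @ rc) (Suc (Suc (length lc))) (length lc + length (l # u)) \<longleftrightarrow>
    (absorb_left (window (radius \<phi>)) lc l, rc) \<in> inner_conflicts \<phi> u"
proof (cases "length lc < window (radius \<phi>)")
  case True
  with assms show ?thesis
    by (simp add: inner_conflicts_def absorb_left_def)
next
  case False
  with assms(1) obtain m lt where lc: "lc = m # lt" "length lt = 2 * radius \<phi> + 2"
    by (cases lc) (auto simp: window_def)
  then have "conflict_within \<phi> (m # (lt @ l # u @ rc)) (Suc (Suc (Suc (length lt)))) (Suc (Suc (length lt + length u)))
      \<longleftrightarrow> conflict_within \<phi> (lt @ l # u @ rc) (Suc (Suc (length lt))) (Suc (length lt + length u))"
    by (intro conflict_within_Cons_iff) auto
  then show ?thesis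
    using False assms lc by (simp add: inner_conflicts_def absorb_left_def window_def)
qed

lemma conflict_within_snoc_inner_conflicts:
  assumes "length lc \<le> window (radius \<phi>)" "length rc \<le> window (radius \<phi>)"
  shows "conflict_within \<phi> (lc @ (u @ [l]) @ rc) (Suc (length lc)) (length lc + length u) \<longleftrightarrow>
    (lc, absorb_right (window (radius \<phi>)) l rc) \<in> inner_conflicts \<phi> u"
proof (cases "length rc < window (radius \<phi>)")
  case True
  with assms show ?thesis
    by (simp add: inner_conflicts_def absorb_right_def)
next
  case False
  with assms(2) obtain m rb where rc: "rc = rb @ [m]" "length rb = 2 * radius \<phi> + 2"
    by (cases rc rule: rev_exhaust) (auto simp: window_def)
  then have "conflict_within \<phi> ((lc @ u @ l # rb) @ [m]) (Suc (length lc)) (length lc + length u)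
      \<longleftrightarrow> conflict_within \<phi> (lc @ u @ l # rb) (Suc (length lc)) (length lc + length u)"
    by (intro conflict_within_snoc_iff) auto
  then show ?thesis
    using False assms rc by (simp add: inner_conflicts_def absorb_right_def window_def)
qed

definition same_ends :: "nat \<Rightarrow> 'a list \<Rightarrow> 'a list \<Rightarrow> bool" where
  "same_ends W u v \<longleftrightarrow> W \<le> length u \<and> W \<le> length v \<and> take W u = take W v \<and> take W (rev u) = take W (rev v)"

lemma same_ends_sym: "same_ends W u v \<Longrightarrow> same_ends W v u"
  by (auto simp: same_ends_def)

lemma upred_holds_eqI:
  "w ! (p - 1) = w' ! (p' - 1) \<Longrightarrow> (p = 1 \<longleftrightarrow> p' = 1) \<Longrightarrow> (p = length w \<longleftrightarrow> p' = length w') \<Longrightarrow>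
    upred_holds w U p = upred_holds w' U p'"
  by (cases U) auto

lemma shift_inner_interval:
  assumes "window K \<le> length u" "a \<le> K" "b \<le> K"
  shows "shift (length (lc @ u @ rc)) (Suc (length lc)) (int a) = Suc (length lc) + a"
    and "shift (length (lc @ u @ rc)) (length lc + length u) (- int b) = length lc + length u - b"
    and "Suc (length lc) + a \<le> length lc + length u - b"
  using assms by (simp_all add: shift_nonneg shift_nonpos window_def)

context
  fixes K :: nat and u v :: "'a list"
  assumes ends: "same_ends (window K) u v"
begin

lemma same_ends_nth_left:
  assumes "k < length lc + window K"
  shows "(lc @ u @ rc) ! k = (lc @ v @ rc) ! k"
proof (cases "k < length lc")
  case False
  define i where "i = k - length lc"
  have i: "i < window K" "window K \<le> length u" "window K \<le> length v"
    using assms False ends by (auto simp: i_def same_ends_def)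
  then have "u ! i = v ! i"
    using ends unfolding same_ends_def by (metis nth_take)
  moreover have "k = length lc + i"
    using False by (simp add: i_def)
  ultimately show ?thesis
    using i by (simp add: nth_append)
qed (simp add: nth_append)

lemma same_ends_nth_right:
  assumes "t < window K"
  shows "(lc @ u @ rc) ! (length lc + length u - Suc t) = (lc @ v @ rc) ! (length lc + length v - Suc t)"
proof -
  have "rev u ! t = rev v ! t"
    using ends assms unfolding same_ends_def by (metis nth_take)
  moreover have "t < length u" "t < length v"
    using ends assms by (auto simp: same_ends_def)
  ultimately have "u ! (length u - Suc t) = v ! (length v - Suc t)"
    by (simp add: rev_nth)
  moreover have "(lc @ w @ rc) ! (length lc + length w - Suc t) = w ! (length w - Suc t)"
    if "t < length w" for w :: "'a list"
  proof -
    have "length lc + length w - Suc t = length lc + (length w - Suc t)" "length w - Suc t < length w"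
      using that by simp_all
    then show ?thesis
      by (simp only: nth_append_length_plus) (simp add: nth_append)
  qed
  ultimately show ?thesis
    using \<open>t < length u\<close> \<open>t < length v\<close> by simp
qed

lemma same_neighbourhood_left_end:
  "same_neighbourhood K (lc @ u @ rc) (Suc (length lc)) (lc @ v @ rc) (Suc (length lc))"
  unfolding same_neighbourhood_def
proof (intro allI impI)
  fix U and a :: int
  assume a: "\<bar>a\<bar> \<le> int K"
  define p where "p = shift (length (lc @ u @ rc)) (Suc (length lc)) a"
  have long: "window K \<le> length u" "window K \<le> length v"
    using ends by (auto simp: same_ends_def)
  have p_v: "shift (length (lc @ v @ rc)) (Suc (length lc)) a = p"
    and p_bounds: "1 \<le> p" "p \<le> Suc (length lc) + K"
    using a long unfolding p_def
    by (cases rule: bounded_int_cases; simp add: shift_nonneg shift_nonpos window_def)+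
  have "p < length (lc @ u @ rc)" "p < length (lc @ v @ rc)"
    using p_bounds long by (auto simp: window_def)
  moreover have "(lc @ u @ rc) ! (p - 1) = (lc @ v @ rc) ! (p - 1)"
    using p_bounds by (intro same_ends_nth_left) (simp add: window_def)
  ultimately show "upred_holds (lc @ u @ rc) U (shift (length (lc @ u @ rc)) (Suc (length lc)) a) =
      upred_holds (lc @ v @ rc) U (shift (length (lc @ v @ rc)) (Suc (length lc)) a)"
    unfolding p_v p_def[symmetric] by (intro upred_holds_eqI) auto
qed

lemma same_neighbourhood_right_end:
  "same_neighbourhood K (lc @ u @ rc) (length lc + length u) (lc @ v @ rc) (length lc + length v)"
  unfolding same_neighbourhood_def
proof (intro allI impI)
  fix U and a :: int
  assume "\<bar>a\<bar> \<le> int K"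
  have long: "window K \<le> length u" "window K \<le> length v"
    using ends by (auto simp: same_ends_def)
  from \<open>\<bar>a\<bar> \<le> int K\<close> show "upred_holds (lc @ u @ rc) U (shift (length (lc @ u @ rc)) (length lc + length u) a) =
      upred_holds (lc @ v @ rc) U (shift (length (lc @ v @ rc)) (length lc + length v) a)"
  proof (cases rule: bounded_int_cases)
    case (1 k)
    define d where "d = min k (length rc)"
    have shift_eq: "shift (length (lc @ w @ rc)) (length lc + length w) a = length lc + length w + d" for w :: "'a list"
      using 1 by (simp add: shift_nonneg d_def)
    have "(lc @ u @ rc) ! (length lc + length u + d - 1) = (lc @ v @ rc) ! (length lc + length v + d - 1)"
    proof (cases d)
      case 0
      then show ?thesis
        using same_ends_nth_right[of 0 lc rc] by (simp add: window_def)
    next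
      case (Suc d')
      then show ?thesis
        by (simp add: nth_append)
    qed
    then show ?thesis
      unfolding shift_eq using long by (intro upred_holds_eqI) (auto simp: window_def)
  next
    case (2 k)
    have shift_eq: "shift (length (lc @ w @ rc)) (length lc + length w) a = length lc + length w - k"
      if "window K \<le> length w" for w :: "'a list"
      using 2 that by (simp add: shift_nonpos window_def)
    have "(lc @ u @ rc) ! (length lc + length u - Suc k) = (lc @ v @ rc) ! (length lc + length v - Suc k)"
      using 2 by (intro same_ends_nth_right) (simp add: window_def)
    then show ?thesis
      unfolding shift_eq[OF long(1)] shift_eq[OF long(2)] using 2 long
      by (intro upred_holds_eqI) (auto simp: window_def)
  qed
qed

end

text \<open>Intervals covering a whole factor \<open>u\<close> only see its two ends directly; everything else
  they see through proper subintervals.\<close>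
lemma derived_conflict_at_same_ends:
  assumes ends: "same_ends (window (radius \<phi>)) u v"
    and off_diagonal: "\<And>S a b. a \<le> radius \<phi> \<Longrightarrow> b \<le> radius \<phi> \<Longrightarrow> (a, b) \<noteq> (0, 0) \<Longrightarrow>
      derived \<phi> (lc @ u @ rc) S (Suc (length lc) + a) (length lc + length u - b) \<Longrightarrow>
      derived \<phi> (lc @ v @ rc) S (Suc (length lc) + a) (length lc + length v - b)"
  shows "derived \<phi> (lc @ u @ rc) R (Suc (length lc)) (length lc + length u) \<Longrightarrow>
      derived \<phi> (lc @ v @ rc) R (Suc (length lc)) (length lc + length v)"
    and "conflict_at \<phi> (lc @ u @ rc) (Suc (length lc)) (length lc + length u) \<Longrightarrow>
      conflict_at \<phi> (lc @ v @ rc) (Suc (length lc)) (length lc + length v)"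
proof -
  have long: "window (radius \<phi>) \<le> length u" "window (radius \<phi>) \<le> length v"
    using ends by (auto simp: same_ends_def)
  interpret derivation_simulation \<phi> "lc @ u @ rc" "lc @ v @ rc"
    "\<lambda>x y x' y'. x = Suc (length lc) \<and> y = length lc + length u \<and> x' = Suc (length lc) \<and> y' = length lc + length v"
  proof
    fix x y x' y'
    assume "x = Suc (length lc) \<and> y = length lc + length u \<and> x' = Suc (length lc) \<and> y' = length lc + length v"
    moreover note same_neighbourhood_left_end[OF ends, of lc rc] same_neighbourhood_right_end[OF ends, of lc rc]
    ultimately show "1 \<le> x' \<and> x' \<le> y' \<and> y' \<le> length (lc @ v @ rc)"
      and "same_neighbourhood (radius \<phi>) (lc @ u @ rc) x (lc @ v @ rc) x' \<and>
        same_neighbourhood (radius \<phi>) (lc @ u @ rc) y (lc @ v @ rc) y' \<and> (x = y \<longleftrightarrow> x' = y') \<and> (x < y \<longleftrightarrow> x' < y')"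
      using long by (auto simp: window_def)
  next
    fix x y x' y' S a b
    assume P: "x = Suc (length lc) \<and> y = length lc + length u \<and> x' = Suc (length lc) \<and> y' = length lc + length v"
      and ab: "a \<le> radius \<phi>" "b \<le> radius \<phi>"
      and "hyp_holds (lc @ u @ rc) (derived \<phi> (lc @ u @ rc)) x y (HRel S a b)"
    then have "derived \<phi> (lc @ u @ rc) S (Suc (length lc) + a) (length lc + length u - b)"
      using shift_inner_interval[OF long(1) ab] by (simp add: Let_def)
    then show "hyp_holds (lc @ v @ rc) (\<lambda>S i' j'.
        (shift (length (lc @ u @ rc)) x (int a) = Suc (length lc) \<and>
         shift (length (lc @ u @ rc)) y (- int b) = length lc + length u \<and>
         i' = Suc (length lc) \<and> j' = length lc + length v) \<or> derived \<phi> (lc @ v @ rc) S i' j') x' y' (HRel S a b)"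
      using P off_diagonal[OF ab] shift_inner_interval[OF long(1) ab] shift_inner_interval[OF long(2) ab]
      by (cases "(a, b) = (0, 0)") (auto simp: Let_def)
  qed
  show "derived \<phi> (lc @ u @ rc) R (Suc (length lc)) (length lc + length u) \<Longrightarrow>
      derived \<phi> (lc @ v @ rc) R (Suc (length lc)) (length lc + length v)"
    and "conflict_at \<phi> (lc @ u @ rc) (Suc (length lc)) (length lc + length u) \<Longrightarrow>
      conflict_at \<phi> (lc @ v @ rc) (Suc (length lc)) (length lc + length v)"
    using derived_simulated conflict_at_simulated by blast+
qed

lemma same_ends_hd_last:
  assumes "same_ends (window K) u v"
  shows "hd u = hd v" "last u = last v"
proof -
  have "take (window K) u ! 0 = take (window K) v ! 0" "take (window K) (rev u) ! 0 = take (window K) (rev v) ! 0"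
    using assms by (simp_all add: same_ends_def)
  moreover have "u \<noteq> []" "v \<noteq> []"
    using assms by (auto simp: same_ends_def window_def)
  ultimately show "hd u = hd v" "last u = last v"
    by (simp_all add: window_def hd_conv_nth last_conv_nth rev_nth)
qed

lemma derived_inner_facts_tl:
  assumes "u \<noteq> []" "length lc \<le> window (radius \<phi>)" "length rc \<le> window (radius \<phi>)"
    "Suc a \<le> radius \<phi>" "b \<le> radius \<phi>"
  shows "derived \<phi> (lc @ u @ rc) S (Suc (length lc) + Suc a) (length lc + length u - b) \<longleftrightarrow>
    (absorb_left (window (radius \<phi>)) lc (hd u), rc, S, a, b) \<in> inner_facts \<phi> (tl u)"
  using derived_Cons_inner_facts[OF assms(2-5), of "hd u" "tl u" S] assms(1) by simp

lemma derived_inner_facts_butlast: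
  assumes "u \<noteq> []" "length lc \<le> window (radius \<phi>)" "length rc \<le> window (radius \<phi>)"
    "a \<le> radius \<phi>" "Suc b \<le> radius \<phi>"
  shows "derived \<phi> (lc @ u @ rc) S (Suc (length lc) + a) (length lc + length u - Suc b) \<longleftrightarrow>
    (lc, absorb_right (window (radius \<phi>)) (last u) rc, S, a, b) \<in> inner_facts \<phi> (butlast u)"
  using derived_snoc_inner_facts[OF assms(2-5), of "butlast u" "last u" S] assms(1) by simp

lemma derived_off_diagonal_iff:
  assumes ends: "same_ends (window (radius \<phi>)) u v"
    and tl: "inner_facts \<phi> (tl u) = inner_facts \<phi> (tl v)"
    and butlast: "inner_facts \<phi> (butlast u) = inner_facts \<phi> (butlast v)"
    and lc: "length lc \<le> window (radius \<phi>)" and rc: "length rc \<le> window (radius \<phi>)"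
    and ab: "a \<le> radius \<phi>" "b \<le> radius \<phi>" "(a, b) \<noteq> (0, 0)"
  shows "derived \<phi> (lc @ u @ rc) S (Suc (length lc) + a) (length lc + length u - b) \<longleftrightarrow>
    derived \<phi> (lc @ v @ rc) S (Suc (length lc) + a) (length lc + length v - b)"
proof -
  have "u \<noteq> []" "v \<noteq> []"
    using ends by (auto simp: same_ends_def window_def)
  show ?thesis
  proof (cases a)
    case (Suc a')
    with ab show ?thesis
      using derived_inner_facts_tl[OF \<open>u \<noteq> []\<close> lc rc, of a' b S]
        derived_inner_facts_tl[OF \<open>v \<noteq> []\<close> lc rc, of a' b S] tl same_ends_hd_last[OF ends] by simp
  next
    case 0
    with ab obtain b' where "b = Suc b'"
      by (cases b) auto
    with 0 ab show ?thesis
      using derived_inner_facts_butlast[OF \<open>u \<noteq> []\<close> lc rc, of 0 b' S]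
        derived_inner_facts_butlast[OF \<open>v \<noteq> []\<close> lc rc, of 0 b' S] butlast same_ends_hd_last[OF ends] by simp
  qed
qed

lemma inner_facts_eq:
  assumes ends: "same_ends (window (radius \<phi>)) u v"
    and "inner_facts \<phi> (tl u) = inner_facts \<phi> (tl v)"
    and "inner_facts \<phi> (butlast u) = inner_facts \<phi> (butlast v)"
  shows "inner_facts \<phi> u = inner_facts \<phi> v"
proof -
  note off_diagonal = derived_off_diagonal_iff[OF ends assms(2,3)]
  have "derived \<phi> (lc @ u @ rc) S (Suc (length lc) + a) (length lc + length u - b) \<longleftrightarrow>
      derived \<phi> (lc @ v @ rc) S (Suc (length lc) + a) (length lc + length v - b)"
    if "length lc \<le> window (radius \<phi>)" "length rc \<le> window (radius \<phi>)" "a \<le> radius \<phi>" "b \<le> radius \<phi>"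
    for lc rc S a b
  proof (cases "(a, b) = (0, 0)")
    case True
    have "derived \<phi> (lc @ u @ rc) S (Suc (length lc)) (length lc + length u) \<Longrightarrow>
        derived \<phi> (lc @ v @ rc) S (Suc (length lc)) (length lc + length v)"
      by (rule derived_conflict_at_same_ends(1)[OF ends]) (use off_diagonal that in blast)
    moreover have "derived \<phi> (lc @ v @ rc) S (Suc (length lc)) (length lc + length v) \<Longrightarrow>
        derived \<phi> (lc @ u @ rc) S (Suc (length lc)) (length lc + length u)"
      by (rule derived_conflict_at_same_ends(1)[OF same_ends_sym[OF ends]]) (use off_diagonal that in blast)
    ultimately show ?thesis
      using True by auto
  qed (use off_diagonal that in blast)
  then show ?thesis
    unfolding inner_facts_def by blast
qed

lemma inner_conflicts_eq:
  assumes ends: "same_ends (window (radius \<phi>)) u v"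
    and "inner_facts \<phi> (tl u) = inner_facts \<phi> (tl v)"
    and "inner_facts \<phi> (butlast u) = inner_facts \<phi> (butlast v)"
    and tl: "inner_conflicts \<phi> (tl u) = inner_conflicts \<phi> (tl v)"
    and butlast: "inner_conflicts \<phi> (butlast u) = inner_conflicts \<phi> (butlast v)"
  shows "inner_conflicts \<phi> u = inner_conflicts \<phi> v"
proof -
  note off_diagonal = derived_off_diagonal_iff[OF ends assms(2,3)]
  have "conflict_within \<phi> (lc @ u @ rc) (Suc (length lc)) (length lc + length u) \<longleftrightarrow>
      conflict_within \<phi> (lc @ v @ rc) (Suc (length lc)) (length lc + length v)"
    if lc: "length lc \<le> window (radius \<phi>)" and rc: "length rc \<le> window (radius \<phi>)" for lc rc
  proof -
    have split: "conflict_within \<phi> (lc @ w @ rc) (Suc (length lc)) (length lc + length w) \<longleftrightarrow>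
        (absorb_left (window (radius \<phi>)) lc (hd w), rc) \<in> inner_conflicts \<phi> (tl w) \<or>
        (lc, absorb_right (window (radius \<phi>)) (last w) rc) \<in> inner_conflicts \<phi> (butlast w) \<or>
        conflict_at \<phi> (lc @ w @ rc) (Suc (length lc)) (length lc + length w)"
      if "window (radius \<phi>) \<le> length w" for w
    proof -
      have "w \<noteq> []" "Suc (length lc) < length lc + length w"
        using that by (auto simp: window_def)
      then show ?thesis
        using conflict_within_split[of "Suc (length lc)" "length lc + length w" \<phi> "lc @ w @ rc"]
          conflict_within_Cons_inner_conflicts[OF lc rc, of "hd w" "tl w"]
          conflict_within_snoc_inner_conflicts[OF lc rc, of "butlast w" "last w"]
        by simp
    qed
    have "conflict_at \<phi> (lc @ u @ rc) (Suc (length lc)) (length lc + length u) \<longleftrightarrow>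
        conflict_at \<phi> (lc @ v @ rc) (Suc (length lc)) (length lc + length v)"
      using derived_conflict_at_same_ends(2)[OF ends] derived_conflict_at_same_ends(2)[OF same_ends_sym[OF ends]]
        off_diagonal lc rc by blast
    then show ?thesis
      using split[of u] split[of v] ends tl butlast same_ends_hd_last[OF ends]
      by (auto simp: same_ends_def)
  qed
  then show ?thesis
    unfolding inner_conflicts_def by blast
qed

definition profile :: "'a formula \<Rightarrow> 'a list \<Rightarrow>
    'a list \<times> 'a list \<times> ('a list \<times> 'a list \<times> nat \<times> nat \<times> nat) set \<times> ('a list \<times> 'a list) set" where
  "profile \<phi> u = (take (window (radius \<phi>)) u, take (window (radius \<phi>)) (rev u), inner_facts \<phi> u, inner_conflicts \<phi> u)"

lemma take_eq_from_tl_butlast: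
  assumes "2 \<le> length u" "2 \<le> length v" "0 < n"
    and "take n (tl u) = take n (tl v)" "take n (butlast u) = take n (butlast v)"
  shows "take n u = take n v"
proof -
  have hd_butlast: "hd (butlast w) = hd w" if "2 \<le> length w" for w :: "'a list"
    using that by (cases w) auto
  have "hd (butlast u) = hd (butlast v)"
    using arg_cong[OF assms(5), of hd] assms(1-3) by (simp add: hd_take)
  then have "hd u = hd v"
    using hd_butlast[OF assms(1)] hd_butlast[OF assms(2)] by simp
  moreover have "take (n - 1) (tl u) = take (n - 1) (tl v)"
    using arg_cong[OF assms(4), of "take (n - 1)"] by simp
  moreover have "take n w = hd w # take (n - 1) (tl w)" if "2 \<le> length w" for w :: "'a list"
    using that assms(3) by (cases w; cases n) auto
  ultimately show ?thesis
    using assms(1,2) by simp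
qed

lemma take_eq_short:
  assumes "take n u = take n v" "length u < n \<or> length v < n"
  shows "u = v"
proof -
  have "min (length u) n = min (length v) n"
    using arg_cong[OF assms(1), of length] by simp
  with assms(2) have "length u < n" "length v < n"
    by (auto simp: min_def split: if_splits)
  with assms(1) show ?thesis
    by simp
qed

lemma profile_compositional:
  assumes "2 \<le> length u" "2 \<le> length v"
    and tl: "profile \<phi> (tl u) = profile \<phi> (tl v)" and butlast: "profile \<phi> (butlast u) = profile \<phi> (butlast v)"
  shows "profile \<phi> u = profile \<phi> v"
proof -
  let ?W = "window (radius \<phi>)"
  have tl_rev: "tl (rev w) = rev (butlast w)" for w :: "'a list"
    by (cases w rule: rev_exhaust) auto
  have "take ?W u = take ?W v"
    by (rule take_eq_from_tl_butlast) (use assms in \<open>simp_all add: profile_def window_def\<close>)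
  moreover have "take ?W (rev u) = take ?W (rev v)"
    by (rule take_eq_from_tl_butlast) (use assms tl_rev in \<open>simp_all add: profile_def window_def\<close>)
  moreover have "inner_facts \<phi> u = inner_facts \<phi> v \<and> inner_conflicts \<phi> u = inner_conflicts \<phi> v"
  proof (cases "?W \<le> length u \<and> ?W \<le> length v")
    case True
    with calculation have ends: "same_ends ?W u v"
      by (simp add: same_ends_def)
    have "inner_facts \<phi> (tl u) = inner_facts \<phi> (tl v)" "inner_facts \<phi> (butlast u) = inner_facts \<phi> (butlast v)"
      "inner_conflicts \<phi> (tl u) = inner_conflicts \<phi> (tl v)"
      "inner_conflicts \<phi> (butlast u) = inner_conflicts \<phi> (butlast v)"
      using tl butlast by (simp_all add: profile_def)
    then show ?thesis
      using inner_facts_eq[OF ends] inner_conflicts_eq[OF ends] by simp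
  next
    case False
    then have "length u < ?W \<or> length v < ?W"
      by linarith
    with \<open>take ?W u = take ?W v\<close> have "u = v"
      by (rule take_eq_short)
    then show ?thesis
      by simp
  qed
  ultimately show ?thesis
    by (simp add: profile_def)
qed

lemma finite_range_profile: "finite (range (profile \<phi> :: 'a::finite list \<Rightarrow> _))"
proof -
  define Ctx where "Ctx = {xs :: 'a list. length xs \<le> window (radius \<phi>)}"
  define Rels where "Rels = CRel -` (snd ` set \<phi>)"
  have "finite Ctx"
    using finite_lists_length_le[of "UNIV :: 'a set"] by (simp add: Ctx_def)
  moreover have "finite Rels"
    unfolding Rels_def by (rule finite_vimageI) (auto simp: inj_def)
  moreover have "S \<in> Rels" if fact: "derived \<phi> w S i j" for w S i j
  proof -
    obtain c where "c \<in> set \<phi>" "snd c = CRel S"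
      using derived_bounds[OF fact] by blast
    then show ?thesis
      unfolding Rels_def using imageI[of c "set \<phi>" snd] by simp
  qed
  then have "inner_facts \<phi> u \<subseteq> Ctx \<times> Ctx \<times> Rels \<times> {..radius \<phi>} \<times> {..radius \<phi>}" for u
    unfolding inner_facts_def Ctx_def by auto
  moreover have "inner_conflicts \<phi> u \<subseteq> Ctx \<times> Ctx" for u
    unfolding inner_conflicts_def Ctx_def by auto
  ultimately have "range (profile \<phi>) \<subseteq>
      Ctx \<times> Ctx \<times> Pow (Ctx \<times> Ctx \<times> Rels \<times> {..radius \<phi>} \<times> {..radius \<phi>}) \<times> Pow (Ctx \<times> Ctx)"
    by (auto simp: profile_def Ctx_def)
  moreover have "finite (Ctx \<times> Ctx \<times> Pow (Ctx \<times> Ctx \<times> Rels \<times> {..radius \<phi>} \<times> {..radius \<phi>}) \<times> Pow (Ctx \<times> Ctx))"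
    using \<open>finite Ctx\<close> \<open>finite Rels\<close> by simp
  ultimately show ?thesis
    by (rule finite_subset)
qed

lemma sat_iff_inner_conflicts: "u \<noteq> [] \<Longrightarrow> sat u \<phi> \<longleftrightarrow> ([], []) \<notin> inner_conflicts \<phi> u"
  by (simp add: sat_iff_no_conflict inner_conflicts_def)

theorem lemma2:
  fixes \<phi> :: "('a::finite) formula"
  shows "\<exists>\<phi>'. normal_form \<phi>' \<and> (\<forall>w::'a list. w \<noteq> [] \<longrightarrow> (sat w \<phi> \<longleftrightarrow> sat w \<phi>'))"
proof -
  have "\<exists>\<phi>'. normal_form \<phi>' \<and> (\<forall>w::'a list. w \<noteq> [] \<longrightarrow> (w \<in> {w. sat w \<phi>} \<longleftrightarrow> sat w \<phi>'))"
  proof (rule normal_form_definable_if_compositional)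
    show "finite (range (profile \<phi>))"
      by (rule finite_range_profile)
    show "profile \<phi> u = profile \<phi> v"
      if "2 \<le> length u" "2 \<le> length v" "profile \<phi> (tl u) = profile \<phi> (tl v)"
        "profile \<phi> (butlast u) = profile \<phi> (butlast v)" for u v :: "'a list"
      using that by (rule profile_compositional)
    show "u \<in> {w. sat w \<phi>} \<longleftrightarrow> v \<in> {w. sat w \<phi>}"
      if "u \<noteq> []" "v \<noteq> []" "profile \<phi> u = profile \<phi> v" for u v :: "'a list"
      using sat_iff_inner_conflicts[OF that(1)] sat_iff_inner_conflicts[OF that(2)] that(3)
      by (simp add: profile_def)
  qed
  then show ?thesis
    by simp
qed

end
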